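(* Let $\mathbf{C}$ be a category of $\mathbf{FI}$ type and $M_\bullet=\bigoplus_i\mathrm{Ind}_{c_i}(V_i)$ a free $\mathbf{C}$-module of degree $\leq c$. Then in the coinvariant $\mathbf{C}$-module $d\mapsto M_d/G_d$, every map induced by a morphism of $\mathbf{C}$ is injective, and every map induced by a morphism $d\to e$ between objects with $c\leq d$ is an isomorphism. Moreover, for every object $d$ with $c_i\leq d$ for all $i$, one has $M_d/G_d\cong\bigoplus_i V_i/G_{c_i}$.
   Context: A category $\mathbf{C}$ is of $\mathbf{FI}$ type if: (1) all Hom-sets are finite; (2) every morphism is a monomorphism and every endomorphism is an isomorphism; (3) for all objects $c,d$ the group $G_d=\mathrm{Aut}_{\mathbf{C}}(d)$ acts transitively on $\mathrm{Hom}_{\mathbf{C}}(c,d)$; (4) for every $d$ only finitely many isomorphism classes of $c$ have $\mathrm{Hom}(c,d)\neq\emptyset$; (5) every pair $c_1\to d\leftarrow c_2$ has a pullback, and every pair $f_i:p\to c_i$ has a weak push-out, i.e. a commutative pullback square $g_i:c_i\to d$ such that for every other pullback square $h_i:c_i\to z$ with $h_1f_1=h_2f_2$ there is a unique $h:d\to z$ with $hg_i=h_i$. Write $c\leq d$ if $\mathrm{Hom}(c,d)\neq\emptyset$. A $\mathbf{C}$-module is a functor to complex vector spaces. For a finite-dimensional $G_c$-representation $V$, $\mathrm{Ind}_c(V)$ is $d\mapsto\mathbb{C}[\mathrm{Hom}(c,d)]\otimes_{\mathbb{C}[G_c]}V$. A free module is a finite direct sum of these, of degree $\leq d$ if each summand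 $\mathrm{Ind}_c(V)$ ($V\neq0$) has $c\leq d$. $W/G$ denotes coinvariants; for a $\mathbf{C}$-module these form a $\mathbf{C}$-module. *)

theory Defs
  imports Complex_Main "HOL-Library.Function_Algebras"
begin

record ('o, 'm) cat =
  Ob   :: "'o set"
  Hom  :: "'o \<Rightarrow> 'o \<Rightarrow> 'm set"
  comp :: "'m \<Rightarrow> 'm \<Rightarrow> 'm"   (* comp C g f = g \<circ> f *)
  idm  :: "'o \<Rightarrow> 'm"

definition is_category :: "('o, 'm) cat \<Rightarrow> bool" where
  "is_category C \<longleftrightarrow>
     (\<forall>a b. (a \<notin> Ob C \<or> b \<notin> Ob C) \<longrightarrow> Hom C a b = {}) \<and>
     (\<forall>a b a' b' f. f \<in> Hom C a b \<and> f \<in> Hom C a' b' \<longrightarrow> a = a' \<and> b = b') \<and>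
     (\<forall>a\<in>Ob C. idm C a \<in> Hom C a a) \<and>
     (\<forall>a b c f g. f \<in> Hom C a b \<and> g \<in> Hom C b c \<longrightarrow> comp C g f \<in> Hom C a c) \<and>
     (\<forall>a b c d f g h. f \<in> Hom C a b \<and> g \<in> Hom C b c \<and> h \<in> Hom C c d \<longrightarrow>
         comp C h (comp C g f) = comp C (comp C h g) f) \<and>
     (\<forall>a b f. f \<in> Hom C a b \<longrightarrow> comp C (idm C b) f = f \<and> comp C f (idm C a) = f)"

definition is_iso :: "('o, 'm) cat \<Rightarrow> 'o \<Rightarrow> 'o \<Rightarrow> 'm \<Rightarrow> bool" where
  "is_iso C a b f \<longleftrightarrow> f \<in> Hom C a b \<and>
     (\<exists>g\<in>Hom C b a. comp C g f = idm C a \<and> comp C f g = idm C b)"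

definition Aut :: "('o, 'm) cat \<Rightarrow> 'o \<Rightarrow> 'm set" where
  "Aut C d = {f. is_iso C d d f}"

definition obj_iso :: "('o, 'm) cat \<Rightarrow> 'o \<Rightarrow> 'o \<Rightarrow> bool" where
  "obj_iso C a b \<longleftrightarrow> (\<exists>f. is_iso C a b f)"

definition is_mono :: "('o, 'm) cat \<Rightarrow> 'o \<Rightarrow> 'o \<Rightarrow> 'm \<Rightarrow> bool" where
  "is_mono C a b f \<longleftrightarrow> f \<in> Hom C a b \<and>
     (\<forall>x\<in>Ob C. \<forall>g\<in>Hom C x a. \<forall>h\<in>Hom C x a. comp C f g = comp C f h \<longrightarrow> g = h)"

text \<open>c \<le> d in the paper: Hom(c,d) is nonempty.\<close>
definition obj_le :: "('o, 'm) cat \<Rightarrow> 'o \<Rightarrow> 'o \<Rightarrow> bool" where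
  "obj_le C c d \<longleftrightarrow> Hom C c d \<noteq> {}"

definition is_pullback ::
  "('o, 'm) cat \<Rightarrow> 'o \<Rightarrow> 'o \<Rightarrow> 'o \<Rightarrow> 'o \<Rightarrow> 'm \<Rightarrow> 'm \<Rightarrow> 'm \<Rightarrow> 'm \<Rightarrow> bool" where
  "is_pullback C p c1 c2 d p1 p2 f1 f2 \<longleftrightarrow>
     p \<in> Ob C \<and> p1 \<in> Hom C p c1 \<and> p2 \<in> Hom C p c2 \<and> f1 \<in> Hom C c1 d \<and> f2 \<in> Hom C c2 d \<and>
     comp C f1 p1 = comp C f2 p2 \<and>
     (\<forall>z\<in>Ob C. \<forall>h1\<in>Hom C z c1. \<forall>h2\<in>Hom C z c2. comp C f1 h1 = comp C f2 h2 \<longrightarrow>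
        (\<exists>!h. h \<in> Hom C z p \<and> comp C p1 h = h1 \<and> comp C p2 h = h2))"

definition FI_type :: "('o, 'm) cat \<Rightarrow> bool" where
  "FI_type C \<longleftrightarrow> is_category C \<and>
     \<comment> \<open>(1) finite Hom-sets\<close>
     (\<forall>a\<in>Ob C. \<forall>b\<in>Ob C. finite (Hom C a b)) \<and>
     \<comment> \<open>(2) monomorphisms; endomorphisms are isomorphisms\<close>
     (\<forall>a b f. f \<in> Hom C a b \<longrightarrow> is_mono C a b f) \<and>
     (\<forall>a f. f \<in> Hom C a a \<longrightarrow> is_iso C a a f) \<and>
     \<comment> \<open>(3) Aut(d) acts transitively on Hom(c,d)\<close>
     (\<forall>c\<in>Ob C. \<forall>d\<in>Ob C. \<forall>f\<in>Hom C c d. \<forall>f'\<in>Hom C c d. \<exists>g\<in>Aut C d. comp C g f = f') \<and>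
     \<comment> \<open>(4) finitely many isomorphism classes below each object\<close>
     (\<forall>d\<in>Ob C. \<exists>S. finite S \<and> S \<subseteq> Ob C \<and>
        (\<forall>c\<in>Ob C. Hom C c d \<noteq> {} \<longrightarrow> (\<exists>s\<in>S. obj_iso C c s))) \<and>
     \<comment> \<open>(5a) pullbacks\<close>
     (\<forall>c1 c2 d f1 f2. f1 \<in> Hom C c1 d \<and> f2 \<in> Hom C c2 d \<longrightarrow>
        (\<exists>p p1 p2. is_pullback C p c1 c2 d p1 p2 f1 f2)) \<and>
     \<comment> \<open>(5b) weak push-outs\<close>
     (\<forall>p c1 c2 f1 f2. f1 \<in> Hom C p c1 \<and> f2 \<in> Hom C p c2 \<longrightarrow>
        (\<exists>d g1 g2. d \<in> Ob C \<and> is_pullback C p c1 c2 d f1 f2 g1 g2 \<and>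
           (\<forall>z h1 h2. is_pullback C p c1 c2 z f1 f2 h1 h2 \<longrightarrow>
              (\<exists>!h. h \<in> Hom C d z \<and> comp C h g1 = h1 \<and> comp C h g2 = h2))))"

definition fsc :: "(complex \<Rightarrow> 'v \<Rightarrow> 'v) \<Rightarrow> complex \<Rightarrow> ('i \<Rightarrow> 'v) \<Rightarrow> ('i \<Rightarrow> 'v)" where
  "fsc sc a x = (\<lambda>i. sc a (x i))"

definition lin_on :: "(complex \<Rightarrow> 'a::ab_group_add \<Rightarrow> 'a) \<Rightarrow> (complex \<Rightarrow> 'b::ab_group_add \<Rightarrow> 'b) \<Rightarrow> 'a set \<Rightarrow>
    ('a \<Rightarrow> 'b) \<Rightarrow> bool" where
  "lin_on s1 s2 A h \<longleftrightarrow> (\<forall>x\<in>A. \<forall>y\<in>A. h (x + y) = h x + h y) \<and>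
                         (\<forall>a. \<forall>x\<in>A. h (s1 a x) = s2 a (h x))"

text \<open>The map A/K \<rightarrow> B/L induced by h is injective, resp. surjective.\<close>
definition induced_inj :: "'a set \<Rightarrow> 'a set \<Rightarrow> 'b::ab_group_add set \<Rightarrow> ('a \<Rightarrow> 'b) \<Rightarrow> bool" where
  "induced_inj A K L h \<longleftrightarrow> (\<forall>x\<in>A. h x \<in> L \<longrightarrow> x \<in> K)"

definition induced_surj :: "'a set \<Rightarrow> 'b::ab_group_add set \<Rightarrow> 'b set \<Rightarrow> ('a \<Rightarrow> 'b) \<Rightarrow> bool" where
  "induced_surj A B L h \<longleftrightarrow> (\<forall>y\<in>B. \<exists>x\<in>A. y - h x \<in> L)"

definition quot_iso :: "(complex \<Rightarrow> 'a::ab_group_add \<Rightarrow> 'a) \<Rightarrow> 'a set \<Rightarrow> 'a set \<Rightarrow>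
    (complex \<Rightarrow> 'b::ab_group_add \<Rightarrow> 'b) \<Rightarrow> 'b set \<Rightarrow> 'b set \<Rightarrow> bool" where
  "quot_iso s1 A K s2 B L \<longleftrightarrow> (\<exists>h::'a \<Rightarrow> 'b.
      (\<forall>x\<in>A. h x \<in> B) \<and> lin_on s1 s2 A h \<and> (\<forall>x\<in>K. h x \<in> L) \<and>
      induced_inj A K L h \<and> induced_surj A B L h)"

definition is_rep :: "('o, 'm) cat \<Rightarrow> (complex \<Rightarrow> 'v::ab_group_add \<Rightarrow> 'v) \<Rightarrow> 'o \<Rightarrow> 'v set \<Rightarrow>
    ('m \<Rightarrow> 'v \<Rightarrow> 'v) \<Rightarrow> bool" where
  "is_rep C sc c V rho \<longleftrightarrow>
     module.subspace sc V \<and> (\<exists>B. finite B \<and> V = module.span sc B) \<and>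
     (\<forall>g\<in>Aut C c. (\<forall>v\<in>V. rho g v \<in> V) \<and> lin_on sc sc V (rho g)) \<and>
     (\<forall>v\<in>V. rho (idm C c) v = v) \<and>
     (\<forall>g\<in>Aut C c. \<forall>h\<in>Aut C c. \<forall>v\<in>V. rho (comp C g h) v = rho g (rho h v))"

text \<open>Ambient space for the value at d of the free module \<Oplus>_{i<n} Ind_{c_i}(V_i):
  \<Oplus>_{i<n} \<complex>[Hom(c_i,d)] \<otimes>_\<complex> V_i, as functions x i f \<in> V_i (f \<in> Hom(c_i,d)), zero elsewhere.\<close>
definition pre_mod :: "('o, 'm) cat \<Rightarrow> nat \<Rightarrow> (nat \<Rightarrow> 'o) \<Rightarrow> (nat \<Rightarrow> 'v::zero set) \<Rightarrow> 'o \<Rightarrow>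
    (nat \<Rightarrow> 'm \<Rightarrow> 'v) set" where
  "pre_mod C n c V d = {x. \<forall>i f. (i < n \<and> f \<in> Hom C (c i) d \<longrightarrow> x i f \<in> V i) \<and>
                                 (\<not> (i < n \<and> f \<in> Hom C (c i) d) \<longrightarrow> x i f = 0)}"

definition msc :: "(complex \<Rightarrow> 'v \<Rightarrow> 'v) \<Rightarrow> complex \<Rightarrow> (nat \<Rightarrow> 'm \<Rightarrow> 'v) \<Rightarrow> (nat \<Rightarrow> 'm \<Rightarrow> 'v)" where
  "msc sc a x = (\<lambda>i f. sc a (x i f))"

definition single :: "nat \<Rightarrow> 'm \<Rightarrow> 'v::zero \<Rightarrow> (nat \<Rightarrow> 'm \<Rightarrow> 'v)" where
  "single i f v = (\<lambda>j g. if j = i \<and> g = f then v else 0)"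

text \<open>Relations defining the tensor product over \<complex>[G_{c_i}]: (f \<circ> g) \<otimes> v = f \<otimes> g v.\<close>
definition tens_rel :: "('o, 'm) cat \<Rightarrow> (complex \<Rightarrow> 'v::ab_group_add \<Rightarrow> 'v) \<Rightarrow> nat \<Rightarrow> (nat \<Rightarrow> 'o) \<Rightarrow>
    (nat \<Rightarrow> 'v set) \<Rightarrow> (nat \<Rightarrow> 'm \<Rightarrow> 'v \<Rightarrow> 'v) \<Rightarrow> 'o \<Rightarrow> (nat \<Rightarrow> 'm \<Rightarrow> 'v) set" where
  "tens_rel C sc n c V rho d = module.span (msc sc)
     {single i (comp C f g) v - single i f (rho i g v) | i f g v.
        i < n \<and> f \<in> Hom C (c i) d \<and> g \<in> Aut C (c i) \<and> v \<in> V i}"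

definition push :: "('o, 'm) cat \<Rightarrow> (nat \<Rightarrow> 'o) \<Rightarrow> 'o \<Rightarrow> 'm \<Rightarrow> (nat \<Rightarrow> 'm \<Rightarrow> 'v::comm_monoid_add) \<Rightarrow>
    (nat \<Rightarrow> 'm \<Rightarrow> 'v)" where
  "push C c d phi x = (\<lambda>i f'. \<Sum>f\<in>{f. f \<in> Hom C (c i) d \<and> comp C phi f = f'}. x i f)"

text \<open>M_d = pre_mod / tens_rel; the coinvariants M_d / G_d are pre_mod / coinv_ker.\<close>
definition coinv_ker :: "('o, 'm) cat \<Rightarrow> (complex \<Rightarrow> 'v::ab_group_add \<Rightarrow> 'v) \<Rightarrow> nat \<Rightarrow> (nat \<Rightarrow> 'o) \<Rightarrow>
    (nat \<Rightarrow> 'v set) \<Rightarrow> (nat \<Rightarrow> 'm \<Rightarrow> 'v \<Rightarrow> 'v) \<Rightarrow> 'o \<Rightarrow> (nat \<Rightarrow> 'm \<Rightarrow> 'v) set" where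
  "coinv_ker C sc n c V rho d = module.span (msc sc)
     (tens_rel C sc n c V rho d \<union>
      {push C c d g x - x | g x. g \<in> Aut C d \<and> x \<in> pre_mod C n c V d})"

text \<open>\<Oplus>_{i<n} V_i and the kernel of \<Oplus>_{i<n} V_i \<rightarrow> \<Oplus>_{i<n} V_i / G_{c_i}.\<close>
definition sum_reps :: "nat \<Rightarrow> (nat \<Rightarrow> 'v::zero set) \<Rightarrow> (nat \<Rightarrow> 'v) set" where
  "sum_reps n V = {w. \<forall>i. (i < n \<longrightarrow> w i \<in> V i) \<and> (i \<ge> n \<longrightarrow> w i = 0)}"

definition sum_coinv_ker :: "('o, 'm) cat \<Rightarrow> (complex \<Rightarrow> 'v::ab_group_add \<Rightarrow> 'v) \<Rightarrow> nat \<Rightarrow> (nat \<Rightarrow> 'o) \<Rightarrow>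
    (nat \<Rightarrow> 'v set) \<Rightarrow> (nat \<Rightarrow> 'm \<Rightarrow> 'v \<Rightarrow> 'v) \<Rightarrow> (nat \<Rightarrow> 'v) set" where
  "sum_coinv_ker C sc n c V rho = module.span (fsc sc)
     {(\<lambda>j. if j = i then rho i g v - v else 0) | i g v. i < n \<and> g \<in> Aut C (c i) \<and> v \<in> V i}"

end

theory Submission imports Defs begin

text \<open>
  Everything factors through the augmentation
  \<open>\<Sigma>\<^sub>d : \<Oplus>\<^sub>i \<complex>[Hom(c\<^sub>i,d)] \<otimes> V\<^sub>i \<rightarrow> \<Oplus>\<^sub>i V\<^sub>i\<close>, \<open>f \<otimes> v \<mapsto> v\<close> (\<open>augment d\<close> below),
  which is compatible with post-composition: \<open>\<Sigma>\<^sub>e \<circ> \<phi>\<^sub>* = \<Sigma>\<^sub>d\<close>. It sends the relations of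
  the tensor product to the \<open>G\<^sub>c\<^sub>i\<close>-coinvariance relations and kills the
  \<open>G\<^sub>d\<close>-coinvariance relations. Conversely, because \<open>G\<^sub>d\<close> acts transitively on
  \<open>Hom(c\<^sub>i,d)\<close>, every \<open>f \<otimes> v\<close> is \<open>G\<^sub>d\<close>-congruent to \<open>f\<^sub>0 \<otimes> v\<close> for one fixed
  \<open>f\<^sub>0 = base_mor d i\<close>, and lifting through these \<open>f\<^sub>0\<close> shows that an element is a
  coinvariance relation exactly when its image under \<open>\<Sigma>\<^sub>d\<close> is. Hence \<open>M\<^sub>d/G\<^sub>d\<close> is the
  sum of those \<open>V\<^sub>i/G\<^sub>c\<^sub>i\<close> with \<open>c\<^sub>i \<le> d\<close>, and \<open>\<phi>\<^sub>*\<close> is the inclusion of summands; it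
  is onto once every nonzero summand is already present at \<open>d\<close>, e.g. when \<open>c \<le> d\<close>.
\<close>

lemma sum_fun_apply: "sum F A x = (\<Sum>a\<in>A. F a x)"
  by (induction A rule: infinite_finite_induct) auto

lemma sum_single_apply:
  "finite A \<Longrightarrow> (\<Sum>g\<in>A. single i f v j g) = (if j = i \<and> f \<in> A then v else 0)"
  by (cases "j = i") (simp_all add: single_def)

lemma sum_single_family_apply:
  "finite A \<Longrightarrow> (\<Sum>f\<in>A. single i f (h f) j g) = (if j = i \<and> g \<in> A then h g else 0)"
  by (cases "j = i") (simp_all add: single_def if_distrib[of "\<lambda>b. b = _"] sum.delta' cong: if_cong)

lemma vector_space_imp_module: "vector_space sc \<Longrightarrow> module sc"
  unfolding vector_space_def module_def by auto

lemma module_fsc: "module sc \<Longrightarrow> module (fsc sc)"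
  unfolding module_def fsc_def by (auto simp: fun_eq_iff)

lemma module_msc: "module sc \<Longrightarrow> module (msc sc)"
  unfolding module_def msc_def by (auto simp: fun_eq_iff)

lemma category_comp_in_Hom:
  "is_category C \<Longrightarrow> f \<in> Hom C a b \<Longrightarrow> g \<in> Hom C b e \<Longrightarrow> comp C g f \<in> Hom C a e"
  unfolding is_category_def by blast

lemma category_Hom_Ob: "is_category C \<Longrightarrow> f \<in> Hom C a b \<Longrightarrow> a \<in> Ob C \<and> b \<in> Ob C"
  unfolding is_category_def by (metis empty_iff)

lemma Aut_in_Hom: "g \<in> Aut C d \<Longrightarrow> g \<in> Hom C d d"
  by (simp add: Aut_def is_iso_def)

lemma FI_type_finite_Hom: "FI_type C \<Longrightarrow> finite (Hom C a b)"
  unfolding FI_type_def is_category_def by (metis finite.emptyI)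

lemma FI_type_Aut_transitive:
  assumes "FI_type C" "f \<in> Hom C a d" "f' \<in> Hom C a d"
  shows "\<exists>g\<in>Aut C d. comp C g f = f'"
proof -
  have "a \<in> Ob C" "d \<in> Ob C"
    using assms(1,2) category_Hom_Ob[of C f a d] by (auto simp: FI_type_def)
  moreover have "\<forall>a\<in>Ob C. \<forall>d\<in>Ob C. \<forall>f\<in>Hom C a d. \<forall>f'\<in>Hom C a d. \<exists>g\<in>Aut C d. comp C g f = f'"
    using assms(1) unfolding FI_type_def by (elim conjE)
  ultimately show ?thesis using assms(2,3) by blast
qed

locale free_FI_module =
  fixes C :: "('o, 'm) cat"
    and sc :: "complex \<Rightarrow> 'v::ab_group_add \<Rightarrow> 'v"
    and n :: nat and c :: "nat \<Rightarrow> 'o" and V :: "nat \<Rightarrow> 'v set"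
    and rho :: "nat \<Rightarrow> 'm \<Rightarrow> 'v \<Rightarrow> 'v"
  assumes FI: "FI_type C"
    and vs: "vector_space sc"
    and reps: "\<forall>i<n. is_rep C sc (c i) (V i) (rho i)"

sublocale free_FI_module \<subseteq> S: module sc
  by (rule vector_space_imp_module[OF vs])
sublocale free_FI_module \<subseteq> M: module "msc sc"
  by (rule module_msc[OF vector_space_imp_module[OF vs]])
sublocale free_FI_module \<subseteq> F: module "fsc sc"
  by (rule module_fsc[OF vector_space_imp_module[OF vs]])

context free_FI_module begin

abbreviation Pre :: "'o \<Rightarrow> (nat \<Rightarrow> 'm \<Rightarrow> 'v) set" where
  "Pre d \<equiv> pre_mod C n c V d"
abbreviation Ker :: "'o \<Rightarrow> (nat \<Rightarrow> 'm \<Rightarrow> 'v) set" where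
  "Ker d \<equiv> coinv_ker C sc n c V rho d"
abbreviation SumKer :: "(nat \<Rightarrow> 'v) set" where
  "SumKer \<equiv> sum_coinv_ker C sc n c V rho"

lemma comp_in_Hom: "f \<in> Hom C a b \<Longrightarrow> g \<in> Hom C b e \<Longrightarrow> comp C g f \<in> Hom C a e"
  using FI category_comp_in_Hom by (auto simp: FI_type_def)

lemma finite_Hom: "finite (Hom C a b)"
  by (rule FI_type_finite_Hom[OF FI])

lemma subspace_V: "i < n \<Longrightarrow> S.subspace (V i)"
  using reps by (simp add: is_rep_def)

definition augment :: "'o \<Rightarrow> (nat \<Rightarrow> 'm \<Rightarrow> 'v) \<Rightarrow> nat \<Rightarrow> 'v" where
  "augment d x = (\<lambda>i. if i < n then \<Sum>f\<in>Hom C (c i) d. x i f else 0)"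

definition base_mor :: "'o \<Rightarrow> nat \<Rightarrow> 'm" where
  "base_mor d i = (SOME f. f \<in> Hom C (c i) d)"

definition lift :: "'o \<Rightarrow> (nat \<Rightarrow> 'v) \<Rightarrow> nat \<Rightarrow> 'm \<Rightarrow> 'v" where
  "lift d w = (\<lambda>i f. if i < n \<and> Hom C (c i) d \<noteq> {} \<and> f = base_mor d i then w i else 0)"

lemma base_mor_in_Hom: "Hom C (c i) d \<noteq> {} \<Longrightarrow> base_mor d i \<in> Hom C (c i) d"
  unfolding base_mor_def by (metis ex_in_conv someI)

lemma module_hom_augment: "module_hom (msc sc) (fsc sc) (augment d)"
  by (auto simp: module_hom_iff M.module_axioms F.module_axioms augment_def msc_def fsc_def
      fun_eq_iff sum.distrib S.scale_sum_right)

lemma module_hom_lift: "module_hom (fsc sc) (msc sc) (lift d)"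
  by (auto simp: module_hom_iff M.module_axioms F.module_axioms lift_def msc_def fsc_def
      fun_eq_iff)

lemma subspace_pre_mod: "M.subspace (Pre d)"
  unfolding M.subspace_def pre_mod_def msc_def
  using S.subspace_0 S.subspace_add S.subspace_scale subspace_V by auto

lemma single_in_pre_mod: "i < n \<Longrightarrow> f \<in> Hom C (c i) d \<Longrightarrow> v \<in> V i \<Longrightarrow> single i f v \<in> Pre d"
  using S.subspace_0[OF subspace_V] by (auto simp: pre_mod_def single_def)

lemma lift_in_pre_mod: "w \<in> sum_reps n V \<Longrightarrow> lift d w \<in> Pre d"
  using S.subspace_0[OF subspace_V] base_mor_in_Hom
  by (auto simp: pre_mod_def lift_def sum_reps_def)

lemma augment_in_sum_reps: "x \<in> Pre d \<Longrightarrow> augment d x \<in> sum_reps n V"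
  unfolding sum_reps_def augment_def pre_mod_def
  by (auto intro!: S.subspace_sum[OF subspace_V])

lemma push_in_pre_mod:
  assumes phi: "phi \<in> Hom C d e" and x: "x \<in> Pre d"
  shows "push C c d phi x \<in> Pre e"
  unfolding pre_mod_def push_def
proof (intro CollectI allI conjI impI)
  fix i f' assume i: "i < n \<and> f' \<in> Hom C (c i) e"
  show "(\<Sum>f\<in>{f \<in> Hom C (c i) d. comp C phi f = f'}. x i f) \<in> V i"
    using i x by (auto simp: pre_mod_def intro!: S.subspace_sum[OF subspace_V])
next
  fix i f' assume "\<not> (i < n \<and> f' \<in> Hom C (c i) e)"
  then have "f \<in> Hom C (c i) d \<Longrightarrow> comp C phi f = f' \<Longrightarrow> x i f = 0" for f
    using x comp_in_Hom[OF _ phi] by (auto simp: pre_mod_def)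
  then show "(\<Sum>f\<in>{f \<in> Hom C (c i) d. comp C phi f = f'}. x i f) = 0"
    by simp
qed

lemma push_single:
  assumes "phi \<in> Hom C d e" "f \<in> Hom C (c i) d"
  shows "push C c d phi (single i f v) = single i (comp C phi f) v"
proof -
  have "finite {g \<in> Hom C (c j) d. comp C phi g = f'}" for j f'
    using finite_Hom by simp
  then show ?thesis
    using assms by (auto simp: push_def sum_single_apply fun_eq_iff) (auto simp: single_def)
qed

lemma augment_single:
  assumes "i < n" "f \<in> Hom C (c i) d"
  shows "augment d (single i f v) = (\<lambda>j. if j = i then v else 0)"
  using assms by (auto simp: augment_def sum_single_apply finite_Hom fun_eq_iff)

lemma augment_push: "phi \<in> Hom C d e \<Longrightarrow> augment e (push C c d phi x) = augment d x"
  unfolding augment_def push_def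
  by (auto simp: fun_eq_iff intro!: sum.group[OF finite_Hom finite_Hom] comp_in_Hom)

lemma augment_lift:
  assumes "w \<in> sum_reps n V" "\<forall>i<n. Hom C (c i) d = {} \<longrightarrow> w i = 0"
  shows "augment d (lift d w) = w"
proof
  fix i
  show "augment d (lift d w) i = w i"
  proof (cases "i < n \<and> Hom C (c i) d \<noteq> {}")
    case True
    then show ?thesis
      using base_mor_in_Hom by (simp add: augment_def lift_def finite_Hom sum.delta' cong: if_cong)
  next
    case False
    then show ?thesis using assms by (auto simp: augment_def lift_def sum_reps_def)
  qed
qed

lemma pre_mod_eq_sum_single:
  assumes "y \<in> Pre d"
  shows "y = (\<Sum>i<n. \<Sum>f\<in>Hom C (c i) d. single i f (y i f))"
  using assms
  by (auto simp: pre_mod_def fun_eq_iff sum_fun_apply sum_single_family_apply finite_Hom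
      if_if_eq_conj[symmetric] sum.delta' cong: if_cong)

lemma single_diff_in_coinv_ker:
  assumes i: "i < n" and f: "f \<in> Hom C (c i) d" and f': "f' \<in> Hom C (c i) d"
    and v: "v \<in> V i"
  shows "single i f v - single i f' v \<in> Ker d"
proof -
  obtain g where g: "g \<in> Aut C d" "comp C g f' = f"
    using FI_type_Aut_transitive[OF FI f' f] by blast
  have push: "push C c d g (single i f' v) = single i f v"
    using push_single[OF Aut_in_Hom[OF g(1)] f'] g(2) by simp
  have "push C c d g (single i f' v) - single i f' v \<in> Ker d"
    unfolding coinv_ker_def using g(1) single_in_pre_mod[OF i f' v] by (blast intro: M.span_base)
  then show ?thesis by (simp only: push)
qed

lemma single_rho_diff_in_coinv_ker:
  assumes i: "i < n" and f: "f \<in> Hom C (c i) d" and g: "g \<in> Aut C (c i)" and v: "v \<in> V i"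
  shows "single i f (rho i g v - v) \<in> Ker d"
proof -
  have fg: "comp C f g \<in> Hom C (c i) d"
    by (rule comp_in_Hom[OF Aut_in_Hom[OF g] f])
  have "single i (comp C f g) v - single i f (rho i g v) \<in> tens_rel C sc n c V rho d"
    unfolding tens_rel_def using i f g v by (blast intro: M.span_base)
  then have rel: "single i (comp C f g) v - single i f (rho i g v) \<in> Ker d"
    unfolding coinv_ker_def by (blast intro: M.span_base)
  have move: "single i (comp C f g) v - single i f v \<in> Ker d"
    by (rule single_diff_in_coinv_ker[OF i fg f v])
  have "(single i (comp C f g) v - single i f v)
      - (single i (comp C f g) v - single i f (rho i g v)) \<in> Ker d"
    using move rel unfolding coinv_ker_def by (rule M.span_diff)
  moreover have "(single i (comp C f g) v - single i f v)
      - (single i (comp C f g) v - single i f (rho i g v)) = single i f (rho i g v - v)"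
    by (simp add: single_def fun_eq_iff)
  ultimately show ?thesis by simp
qed

lemma augment_in_sum_coinv_ker:
  assumes "x \<in> Ker d"
  shows "augment d x \<in> SumKer"
proof -
  interpret T: module_hom "msc sc" "fsc sc" "augment d"
    by (rule module_hom_augment)
  have sub: "M.subspace (augment d -` SumKer)"
    unfolding sum_coinv_ker_def by (rule T.subspace_vimage[OF F.subspace_span])
  have "tens_rel C sc n c V rho d \<subseteq> augment d -` SumKer"
    unfolding tens_rel_def
  proof (rule M.span_minimal[OF _ sub], safe)
    fix i f g v
    assume h: "i < n" "f \<in> Hom C (c i) d" "g \<in> Aut C (c i)" "v \<in> V i"
    then have "augment d (single i (comp C f g) v - single i f (rho i g v))
        = - (\<lambda>j. if j = i then rho i g v - v else 0)"
      using comp_in_Hom[OF Aut_in_Hom[OF h(3)] h(2)]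
      by (simp add: T.diff augment_single fun_eq_iff)
    also have "\<dots> \<in> SumKer"
      unfolding sum_coinv_ker_def using h by (blast intro: F.span_neg F.span_base)
    finally show "single i (comp C f g) v - single i f (rho i g v) \<in> augment d -` SumKer"
      by simp
  qed
  moreover have "{push C c d g x - x | g x. g \<in> Aut C d \<and> x \<in> Pre d} \<subseteq> augment d -` SumKer"
    using augment_push[OF Aut_in_Hom] by (auto simp: T.diff sum_coinv_ker_def F.span_zero)
  ultimately have "Ker d \<subseteq> augment d -` SumKer"
    unfolding coinv_ker_def by (intro M.span_minimal[OF _ sub]) auto
  then show ?thesis using assms by auto
qed

lemma lift_in_coinv_ker:
  assumes "w \<in> SumKer"
  shows "lift d w \<in> Ker d"
proof -
  interpret L: module_hom "fsc sc" "msc sc" "lift d"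
    by (rule module_hom_lift)
  have sub: "F.subspace (lift d -` Ker d)"
    unfolding coinv_ker_def by (rule L.subspace_vimage[OF M.subspace_span])
  have "lift d (\<lambda>j. if j = i then rho i g v - v else 0) \<in> Ker d"
    if h: "i < n" "g \<in> Aut C (c i)" "v \<in> V i" for i g v
  proof (cases "Hom C (c i) d = {}")
    case True
    then have "lift d (\<lambda>j. if j = i then rho i g v - v else 0) = 0"
      by (auto simp: lift_def fun_eq_iff)
    then show ?thesis unfolding coinv_ker_def by (simp add: M.span_zero)
  next
    case False
    then have "lift d (\<lambda>j. if j = i then rho i g v - v else 0)
        = single i (base_mor d i) (rho i g v - v)"
      using h(1) by (auto simp: lift_def single_def fun_eq_iff)
    then show ?thesis
      using single_rho_diff_in_coinv_ker[OF h(1) base_mor_in_Hom[OF False] h(2,3)] by simp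
  qed
  then have "SumKer \<subseteq> lift d -` Ker d"
    unfolding sum_coinv_ker_def by (intro F.span_minimal[OF _ sub]) auto
  then show ?thesis using assms by auto
qed

lemma diff_lift_augment_in_coinv_ker:
  assumes y: "y \<in> Pre d"
  shows "y - lift d (augment d y) \<in> Ker d"
proof -
  interpret T: module_hom "msc sc" "fsc sc" "augment d"
    by (rule module_hom_augment)
  interpret L: module_hom "fsc sc" "msc sc" "lift d"
    by (rule module_hom_lift)
  have "module_hom (msc sc) (msc sc) (\<lambda>y. y - lift d (augment d y))"
    by (simp add: module_hom_iff M.module_axioms T.add L.add T.scale L.scale
        M.scale_right_diff_distrib)
  then have sub: "M.subspace ((\<lambda>y. y - lift d (augment d y)) -` Ker d)"
    unfolding coinv_ker_def by (rule module_hom.subspace_vimage[OF _ M.subspace_span])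
  have "single i f (y i f) - lift d (augment d (single i f (y i f))) \<in> Ker d"
    if h: "i < n" "f \<in> Hom C (c i) d" for i f
  proof -
    have ne: "Hom C (c i) d \<noteq> {}" using h(2) by blast
    have "lift d (augment d (single i f (y i f))) = single i (base_mor d i) (y i f)"
      using ne h(1) by (simp add: augment_single[OF h]) (auto simp: lift_def single_def fun_eq_iff)
    then show ?thesis
      using single_diff_in_coinv_ker[OF h base_mor_in_Hom[OF ne]] h y
      by (simp add: pre_mod_def)
  qed
  then have "(\<Sum>i<n. \<Sum>f\<in>Hom C (c i) d. single i f (y i f))
      \<in> (\<lambda>y. y - lift d (augment d y)) -` Ker d"
    by (intro M.subspace_sum[OF sub]) auto
  then show ?thesis using pre_mod_eq_sum_single[OF y] by simp
qed

lemma coinv_ker_iff_augment: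
  assumes "y \<in> Pre d"
  shows "y \<in> Ker d \<longleftrightarrow> augment d y \<in> SumKer"
proof
  assume "augment d y \<in> SumKer"
  then have "(y - lift d (augment d y)) + lift d (augment d y) \<in> Ker d"
    using diff_lift_augment_in_coinv_ker[OF assms] lift_in_coinv_ker
    unfolding coinv_ker_def by (intro M.span_add)
  then show "y \<in> Ker d" by simp
qed (rule augment_in_sum_coinv_ker)

lemma push_induced_inj:
  "phi \<in> Hom C d e \<Longrightarrow> induced_inj (Pre d) (Ker d) (Ker e) (push C c d phi)"
  unfolding induced_inj_def
  using coinv_ker_iff_augment push_in_pre_mod augment_push by simp

lemma push_induced_surj:
  assumes phi: "phi \<in> Hom C d e" and zero: "\<forall>i<n. Hom C (c i) d = {} \<longrightarrow> V i = {0}"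
  shows "induced_surj (Pre d) (Pre e) (Ker e) (push C c d phi)"
  unfolding induced_surj_def
proof
  fix y assume y: "y \<in> Pre e"
  interpret T: module_hom "msc sc" "fsc sc" "augment e"
    by (rule module_hom_augment)
  define x where "x = lift d (augment e y)"
  have w: "augment e y \<in> sum_reps n V"
    by (rule augment_in_sum_reps[OF y])
  then have "augment d x = augment e y"
    unfolding x_def using zero by (intro augment_lift) (auto simp: sum_reps_def)
  then have "augment e (y - push C c d phi x) \<in> SumKer"
    by (simp add: T.diff augment_push[OF phi] sum_coinv_ker_def F.span_zero)
  moreover have x: "x \<in> Pre d"
    unfolding x_def by (rule lift_in_pre_mod[OF w])
  moreover have "y - push C c d phi x \<in> Pre e"
    by (rule M.subspace_diff[OF subspace_pre_mod y push_in_pre_mod[OF phi x]])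
  ultimately show "\<exists>x\<in>Pre d. y - push C c d phi x \<in> Ker e"
    using coinv_ker_iff_augment by blast
qed

lemma quot_iso_sum_reps:
  assumes "\<forall>i<n. Hom C (c i) d \<noteq> {}"
  shows "quot_iso (msc sc) (Pre d) (Ker d) (fsc sc) (sum_reps n V) SumKer"
  unfolding quot_iso_def
proof (intro exI[of _ "augment d"] conjI)
  interpret T: module_hom "msc sc" "fsc sc" "augment d"
    by (rule module_hom_augment)
  show "lin_on (msc sc) (fsc sc) (Pre d) (augment d)"
    by (simp add: lin_on_def T.add T.scale)
  have "lift d w \<in> Pre d \<and> w - augment d (lift d w) \<in> SumKer" if "w \<in> sum_reps n V" for w
    using that assms lift_in_pre_mod augment_lift[of w d]
    by (simp add: sum_coinv_ker_def F.span_zero)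
  then show "induced_surj (Pre d) (sum_reps n V) SumKer (augment d)"
    unfolding induced_surj_def by blast
  show "\<forall>x\<in>Pre d. augment d x \<in> sum_reps n V"
    using augment_in_sum_reps by blast
  show "\<forall>x\<in>Ker d. augment d x \<in> SumKer"
    using augment_in_sum_coinv_ker by blast
  show "induced_inj (Pre d) (Ker d) SumKer (augment d)"
    unfolding induced_inj_def using coinv_ker_iff_augment by blast
qed

end

theorem mainTheorem12:
  fixes C :: "('o, 'm) cat"
    and sc :: "complex \<Rightarrow> 'v::ab_group_add \<Rightarrow> 'v"
    and n :: nat and c :: "nat \<Rightarrow> 'o" and V :: "nat \<Rightarrow> 'v set"
    and rho :: "nat \<Rightarrow> 'm \<Rightarrow> 'v \<Rightarrow> 'v" and c0 :: 'o
  assumes FI: "FI_type C"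
    and vs: "vector_space sc"
    and objs: "\<forall>i<n. c i \<in> Ob C"
    and reps: "\<forall>i<n. is_rep C sc (c i) (V i) (rho i)"
    and c0: "c0 \<in> Ob C"
    and deg: "\<forall>i<n. V i \<noteq> {0} \<longrightarrow> obj_le C (c i) c0"
  shows "(\<forall>d\<in>Ob C. \<forall>e\<in>Ob C. \<forall>phi\<in>Hom C d e.
            induced_inj (pre_mod C n c V d) (coinv_ker C sc n c V rho d)
                        (coinv_ker C sc n c V rho e) (push C c d phi))
       \<and> (\<forall>d\<in>Ob C. \<forall>e\<in>Ob C. \<forall>phi\<in>Hom C d e. obj_le C c0 d \<longrightarrow>
            induced_inj (pre_mod C n c V d) (coinv_ker C sc n c V rho d)
                        (coinv_ker C sc n c V rho e) (push C c d phi) \<and>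
            induced_surj (pre_mod C n c V d) (pre_mod C n c V e)
                         (coinv_ker C sc n c V rho e) (push C c d phi))
       \<and> (\<forall>d\<in>Ob C. (\<forall>i<n. obj_le C (c i) d) \<longrightarrow>
            quot_iso (msc sc) (pre_mod C n c V d) (coinv_ker C sc n c V rho d)
                     (fsc sc) (sum_reps n V) (sum_coinv_ker C sc n c V rho))"
proof -
  interpret free_FI_module C sc n c V rho
    by (rule free_FI_module.intro[OF FI vs reps])
  have "\<forall>i<n. Hom C (c i) d = {} \<longrightarrow> V i = {0}" if "obj_le C c0 d" for d
    using deg that comp_in_Hom by (fastforce simp: obj_le_def)
  then show ?thesis
    using push_induced_inj push_induced_surj quot_iso_sum_reps by (auto simp: obj_le_def)
qed

end
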